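(* Let $A\ge2$, $H\ge5$ and $S\ge A^{(1-1/e)H}$. Then there exists an episodic tabular MDP with $S$ states, $A$ actions, horizon $H$ and deterministic rewards in $\{0,1\}$ such that $$\frac{V^{0,*}}{V^{T,*}}\le\frac{2}{(A-1)^{(1-1/e)H-3}}.$$ Here $V^{0,*}$ is the optimal value of Markovian (no-lookahead) policies and $V^{T,*}$ is the optimal value of one-step transition-lookahead policies.
   Context: Episodic tabular MDP: finite state space of size $S$, finite action space of size $A$, horizon $H$, initial state distribution, transition kernels $P_h(\cdot\mid s,a)$, and non-negative rewards. The value of a policy is the expected sum of rewards over steps $1,\dots,H$. A no-lookahead (Markovian) policy chooses $a_h$ based only on $h$ and $s_h$. For each $(h,s,a)$, the next state $s'_{h}(s,a)\sim P_h(\cdot\mid s,a)$ is drawn independently across $h$, and transitions are independent of rewards. If the agent is at $s_h$ and plays $a_h$, then $s_{h+1}=s'_h(s_h,a_h)$. A one-step transition-lookahead policy, at step $h$ in state $s_h$, observes the realized next states $\{s'_h(s_h,a)\}_{a\in\mathcal A}$ for all actions before choosing $a_h$. It has no reward lookahead. *)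

theory Defs
  imports Complex_Main "HOL-Library.FuncSet"
begin

text \<open>Episodic tabular MDP with states {0..<S}, actions {0..<A}, steps 0..H-1
  (0-indexed version of steps 1..H).  mu s = initial probability of state s,
  P h s a s' = P_h(s' | s, a), r h s a = (deterministic) reward.\<close>

definition is_mdp ::
  "nat \<Rightarrow> nat \<Rightarrow> nat \<Rightarrow> (nat \<Rightarrow> real) \<Rightarrow> (nat \<Rightarrow> nat \<Rightarrow> nat \<Rightarrow> nat \<Rightarrow> real)
   \<Rightarrow> (nat \<Rightarrow> nat \<Rightarrow> nat \<Rightarrow> real) \<Rightarrow> bool" where
  "is_mdp S A H mu P r \<longleftrightarrow>
     (\<forall>s<S. 0 \<le> mu s) \<and> (\<Sum>s<S. mu s) = 1 \<and>
     (\<forall>h<H. \<forall>s<S. \<forall>a<A. (\<forall>s'<S. 0 \<le> P h s a s') \<and> (\<Sum>s'<S. P h s a s') = 1) \<and>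
     (\<forall>h<H. \<forall>s<S. \<forall>a<A. 0 \<le> r h s a)"

definition markov_policy :: "nat \<Rightarrow> (nat \<Rightarrow> nat \<Rightarrow> nat \<Rightarrow> real) \<Rightarrow> bool" where
  "markov_policy A pol \<longleftrightarrow> (\<forall>h s. (\<forall>a. 0 \<le> pol h s a) \<and> (\<Sum>a<A. pol h s a) = 1)"

text \<open>Expected reward-to-go of a Markov policy with n steps remaining
  (current step index H - n) from state s.\<close>

primrec nl_value ::
  "nat \<Rightarrow> nat \<Rightarrow> nat \<Rightarrow> (nat \<Rightarrow> nat \<Rightarrow> nat \<Rightarrow> nat \<Rightarrow> real) \<Rightarrow> (nat \<Rightarrow> nat \<Rightarrow> nat \<Rightarrow> real)
   \<Rightarrow> (nat \<Rightarrow> nat \<Rightarrow> nat \<Rightarrow> real) \<Rightarrow> nat \<Rightarrow> nat \<Rightarrow> real" where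
  "nl_value S A H P r pol 0 s = 0"
| "nl_value S A H P r pol (Suc n) s =
     (let h = H - Suc n in
      (\<Sum>a<A. pol h s a * (r h s a + (\<Sum>s'<S. P h s a s' * nl_value S A H P r pol n s'))))"

definition V0star ::
  "nat \<Rightarrow> nat \<Rightarrow> nat \<Rightarrow> (nat \<Rightarrow> real) \<Rightarrow> (nat \<Rightarrow> nat \<Rightarrow> nat \<Rightarrow> nat \<Rightarrow> real)
   \<Rightarrow> (nat \<Rightarrow> nat \<Rightarrow> nat \<Rightarrow> real) \<Rightarrow> real" where
  "V0star S A H mu P r =
     (SUP pol \<in> {pol. markov_policy A pol}. (\<Sum>s<S. mu s * nl_value S A H P r pol H s))"

text \<open>One-step transition-lookahead policies: pol h s v is the action chosen at step h in
  state s after observing the realized next states v a = s'_h(s,a) for all actions a.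
  The next states of different actions are drawn independently, so the observed vector v
  (an element of PiE {..<A} (\<lambda>_. {..<S})) has probability \<Prod>a<A. P h s a (v a).\<close>

definition lookahead_policy :: "nat \<Rightarrow> (nat \<Rightarrow> nat \<Rightarrow> (nat \<Rightarrow> nat) \<Rightarrow> nat) \<Rightarrow> bool" where
  "lookahead_policy A pol \<longleftrightarrow> (\<forall>h s v. pol h s v < A)"

primrec la_value ::
  "nat \<Rightarrow> nat \<Rightarrow> nat \<Rightarrow> (nat \<Rightarrow> nat \<Rightarrow> nat \<Rightarrow> nat \<Rightarrow> real) \<Rightarrow> (nat \<Rightarrow> nat \<Rightarrow> nat \<Rightarrow> real)
   \<Rightarrow> (nat \<Rightarrow> nat \<Rightarrow> (nat \<Rightarrow> nat) \<Rightarrow> nat) \<Rightarrow> nat \<Rightarrow> nat \<Rightarrow> real" where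
  "la_value S A H P r pol 0 s = 0"
| "la_value S A H P r pol (Suc n) s =
     (let h = H - Suc n in
      (\<Sum>v\<in>PiE {..<A} (\<lambda>_. {..<S}).
          (\<Prod>a<A. P h s a (v a)) *
          (r h s (pol h s v) + la_value S A H P r pol n (v (pol h s v)))))"

definition VTstar ::
  "nat \<Rightarrow> nat \<Rightarrow> nat \<Rightarrow> (nat \<Rightarrow> real) \<Rightarrow> (nat \<Rightarrow> nat \<Rightarrow> nat \<Rightarrow> nat \<Rightarrow> real)
   \<Rightarrow> (nat \<Rightarrow> nat \<Rightarrow> nat \<Rightarrow> real) \<Rightarrow> real" where
  "VTstar S A H mu P r =
     (SUP pol \<in> {pol. lookahead_policy A pol}. (\<Sum>s<S. mu s * la_value S A H P r pol H s))"

end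

theory Submission
  imports Defs "HOL-Analysis.Convex"
begin

text \<open>
  Use only two states: a good state 0 and an absorbing trap 1. From state 0 every action
  keeps the agent in 0 with probability p = 1/A (independently across actions) and otherwise
  drops it into the trap; the only reward is 1 in state 0 at the last step. A Markovian agent
  survives each of the H - 1 transitions with probability p, so V^{0,*} \<le> A^-(H-1). A lookahead
  agent sees which actions keep it in 0 and survives unless all A of them fail, i.e. with
  probability q = 1 - (1 - 1/A)^A \<ge> 1 - 1/e, so V^{T,*} \<ge> q^(H-1). The ratio is at most
  (A q)^-(H-1), and weighted AM-GM gives (A - 1) powr (1 - 1/e) \<le> (1 - 1/e) A.
\<close>

lemma sum_lessThan_eq_first_two:
  fixes f :: "nat \<Rightarrow> 'a::comm_monoid_add"
  assumes "2 \<le> n" and "\<And>k. 2 \<le> k \<Longrightarrow> f k = 0"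
  shows "(\<Sum>k<n. f k) = f 0 + f 1"
proof -
  have "(\<Sum>k<n. f k) = (\<Sum>k<2. f k)"
    using assms by (intro sum.mono_neutral_right) auto
  then show ?thesis by (simp add: numeral_2_eq_2)
qed

lemma sum_lookahead_outcomes_eq_one:
  fixes P :: "nat \<Rightarrow> nat \<Rightarrow> nat \<Rightarrow> nat \<Rightarrow> real" and A S :: nat
  assumes "\<And>a. a < A \<Longrightarrow> (\<Sum>s'<S. P h s a s') = 1"
  shows "(\<Sum>v\<in>PiE {..<A} (\<lambda>_. {..<S}). \<Prod>a<A. P h s a (v a)) = 1"
proof -
  have "(\<Sum>v\<in>PiE {..<A} (\<lambda>_. {..<S}). \<Prod>a<A. P h s a (v a))
      = (\<Prod>a<A. \<Sum>s'<S. P h s a s')"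
    by (rule prod_sum_PiE[symmetric]) auto
  also have "\<dots> = 1"
    by (intro prod.neutral) (simp add: assms)
  finally show ?thesis .
qed

lemma la_value_nonneg:
  assumes "\<And>h s a s'. 0 \<le> P h s a s'" and "\<And>h s a. 0 \<le> r h s a"
  shows "0 \<le> la_value S A H P r pol n s"
proof (induction n arbitrary: s)
  case (Suc n)
  then show ?case
    by (simp add: Let_def assms sum_nonneg mult_nonneg_nonneg prod_nonneg add_nonneg_nonneg)
qed simp

lemma la_value_le_steps:
  assumes "\<And>h s a s'. 0 \<le> P h s a s'" and rows: "\<And>h s a. (\<Sum>s'<S. P h s a s') = 1"
    and "\<And>h s a. r h s a \<le> 1"
  shows "la_value S A H P r pol n s \<le> real n"
proof (induction n arbitrary: s)
  case (Suc n)
  define h where "h = H - Suc n"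
  have "la_value S A H P r pol (Suc n) s
      \<le> (\<Sum>v\<in>PiE {..<A} (\<lambda>_. {..<S}). (\<Prod>a<A. P h s a (v a)) * (1 + real n))"
    unfolding la_value.simps Let_def h_def[symmetric]
    by (intro sum_mono mult_left_mono add_mono prod_nonneg assms Suc.IH)
  also have "\<dots> = 1 + real n"
    by (simp add: sum_lookahead_outcomes_eq_one rows flip: sum_distrib_right)
  finally show ?case by simp
qed simp

lemma V0star_leI:
  assumes "0 < A"
    and "\<And>pol. markov_policy A pol \<Longrightarrow> (\<Sum>s<S. mu s * nl_value S A H P r pol H s) \<le> B"
  shows "V0star S A H mu P r \<le> B"
  unfolding V0star_def
proof (rule cSUP_least)
  have "markov_policy A (\<lambda>h s a. if a = 0 then 1 else 0)"
    using assms(1) by (simp add: markov_policy_def)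
  then show "{pol. markov_policy A pol} \<noteq> {}" by blast
qed (use assms(2) in auto)

lemma VTstar_geI:
  assumes "lookahead_policy A pol"
    and "\<And>pol. lookahead_policy A pol \<Longrightarrow> (\<Sum>s<S. mu s * la_value S A H P r pol H s) \<le> B"
  shows "(\<Sum>s<S. mu s * la_value S A H P r pol H s) \<le> VTstar S A H mu P r"
  unfolding VTstar_def
  by (rule cSUP_upper) (use assms in \<open>auto intro!: bdd_aboveI[where M = B]\<close>)

definition trap_transition :: "real \<Rightarrow> nat \<Rightarrow> nat \<Rightarrow> nat \<Rightarrow> nat \<Rightarrow> real" where
  "trap_transition p h s a s' =
     (if s = 0 then (if s' = 0 then p else if s' = 1 then 1 - p else 0)
      else (if s' = 1 then 1 else 0))"

definition trap_reward :: "nat \<Rightarrow> nat \<Rightarrow> nat \<Rightarrow> nat \<Rightarrow> real" where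
  "trap_reward H h s a = (if s = 0 \<and> h = H - 1 then 1 else 0)"

definition start_at_0 :: "nat \<Rightarrow> real" where
  "start_at_0 s = (if s = 0 then 1 else 0)"

definition stay_policy :: "nat \<Rightarrow> nat \<Rightarrow> nat \<Rightarrow> (nat \<Rightarrow> nat) \<Rightarrow> nat" where
  "stay_policy A h s v = (if \<exists>a<A. v a = 0 then LEAST a. v a = 0 else 0)"

lemma lookahead_policy_stay_policy: "0 < A \<Longrightarrow> lookahead_policy A (stay_policy A)"
  unfolding lookahead_policy_def stay_policy_def by (auto intro: Least_le le_less_trans)

lemma stay_policy_stays: "\<exists>a<A. v a = 0 \<Longrightarrow> v (stay_policy A h s v) = 0"
  unfolding stay_policy_def by (auto intro: LeastI)

locale trap_mdp =
  fixes S A H :: nat and p :: real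
  assumes two_le_S: "2 \<le> S" and p_nonneg: "0 \<le> p" and p_le_one: "p \<le> 1"
begin

abbreviation "P \<equiv> trap_transition p"
abbreviation "r \<equiv> trap_reward H"

lemma P_nonneg: "0 \<le> P h s a s'"
  using p_nonneg p_le_one by (simp add: trap_transition_def)

lemma P_row_sum: "(\<Sum>s'<S. P h s a s') = 1"
  by (subst sum_lessThan_eq_first_two[OF two_le_S]) (auto simp: trap_transition_def)

lemma sum_start_at_0: "(\<Sum>s<S. start_at_0 s * X s) = X 0"
  by (subst sum_lessThan_eq_first_two[OF two_le_S]) (auto simp: start_at_0_def)

lemma is_mdp: "is_mdp S A H start_at_0 P r"
  using sum_start_at_0[of "\<lambda>_. 1"]
  by (simp add: is_mdp_def P_nonneg P_row_sum start_at_0_def trap_reward_def)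

lemma nl_value_le:
  assumes pol: "markov_policy A pol"
  shows "n \<le> H \<Longrightarrow> nl_value S A H P r pol n s \<le> (if s = 0 \<and> 1 \<le> n then p ^ (n - 1) else 0)"
proof (induction n arbitrary: s)
  case (Suc n)
  define h where "h = H - Suc n"
  define V where "V = nl_value S A H P r pol n"
  define B where "B = (if s = 0 then p ^ n else 0)"
  have V0: "V 0 \<le> (if 1 \<le> n then p ^ (n - 1) else 0)" and V1: "V 1 \<le> 0"
    using Suc.IH[of 0] Suc.IH[of 1] Suc.prems by (auto simp: V_def)
  have last_step: "h = H - 1 \<longleftrightarrow> n = 0" using Suc.prems by (auto simp: h_def)
  have step: "r h s a + (\<Sum>s'<S. P h s a s' * V s') \<le> B" for a
  proof -
    have "(\<Sum>s'<S. P h s a s' * V s') = P h s a 0 * V 0 + P h s a 1 * V 1"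
      by (rule sum_lessThan_eq_first_two[OF two_le_S]) (simp add: trap_transition_def)
    moreover have "p * V 0 \<le> p * (if 1 \<le> n then p ^ (n - 1) else 0)"
      using V0 p_nonneg by (rule mult_left_mono)
    moreover have "(1 - p) * V 1 \<le> 0"
      using V1 p_le_one by (simp add: mult_nonneg_nonpos)
    ultimately show ?thesis
      using V1 last_step by (cases n) (auto simp: B_def trap_transition_def trap_reward_def)
  qed
  have "nl_value S A H P r pol (Suc n) s
      = (\<Sum>a<A. pol h s a * (r h s a + (\<Sum>s'<S. P h s a s' * V s')))"
    by (simp add: h_def V_def Let_def)
  also have "\<dots> \<le> (\<Sum>a<A. pol h s a * B)"
    using pol by (intro sum_mono mult_left_mono step) (simp add: markov_policy_def)
  also have "\<dots> = B"
    using pol by (simp add: markov_policy_def flip: sum_distrib_right)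
  finally show ?case by (cases "s = 0") (simp_all add: B_def del: nl_value.simps)
qed simp

lemma stay_probability:
  "(\<Sum>v\<in>{v\<in>PiE {..<A} (\<lambda>_. {..<S}). \<exists>a<A. v a = 0}. \<Prod>a<A. P h 0 a (v a)) = 1 - (1 - p) ^ A"
proof -
  let ?W = "PiE {..<A} (\<lambda>_. {..<S})"
  let ?G = "{v\<in>?W. \<exists>a<A. v a = 0}"
  have fail: "?W - ?G = PiE {..<A} (\<lambda>_. {1..<S})"
    by (force simp: PiE_iff)
  have leave: "(\<Sum>s'\<in>{1..<S}. P h 0 a s') = 1 - p" for a
  proof -
    have "(\<Sum>s'\<in>{1..<S}. P h 0 a s') = (\<Sum>s'\<in>{1}. P h 0 a s')"
      using two_le_S by (intro sum.mono_neutral_right) (auto simp: trap_transition_def)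
    then show ?thesis by (simp add: trap_transition_def)
  qed
  have "(\<Sum>v\<in>?W - ?G. \<Prod>a<A. P h 0 a (v a)) = (\<Prod>a<A. \<Sum>s'\<in>{1..<S}. P h 0 a s')"
    unfolding fail by (rule prod_sum_PiE[symmetric]) auto
  also have "\<dots> = (\<Prod>a<A. 1 - p)"
    by (intro prod.cong refl leave)
  also have "\<dots> = (1 - p) ^ A"
    by simp
  finally have "(\<Sum>v\<in>?W - ?G. \<Prod>a<A. P h 0 a (v a)) = (1 - p) ^ A" .
  moreover have "(\<Sum>v\<in>?W. \<Prod>a<A. P h 0 a (v a)) = 1"
    by (rule sum_lookahead_outcomes_eq_one) (rule P_row_sum)
  moreover have "(\<Sum>v\<in>?W. \<Prod>a<A. P h 0 a (v a))
      = (\<Sum>v\<in>?W - ?G. \<Prod>a<A. P h 0 a (v a)) + (\<Sum>v\<in>?G. \<Prod>a<A. P h 0 a (v a))"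
    by (rule sum.subset_diff) (auto simp: finite_PiE)
  ultimately show ?thesis by simp
qed

lemma la_value_stay_policy_ge:
  "1 \<le> n \<Longrightarrow> n \<le> H \<Longrightarrow> (1 - (1 - p) ^ A) ^ (n - 1) \<le> la_value S A H P r (stay_policy A) n 0"
proof (induction n)
  case (Suc n)
  define h where "h = H - Suc n"
  let ?W = "PiE {..<A} (\<lambda>_. {..<S})"
  let ?G = "{v\<in>?W. \<exists>a<A. v a = 0}"
  let ?pr = "\<lambda>v. \<Prod>a<A. P h 0 a (v a)"
  let ?ret = "\<lambda>v. r h 0 (stay_policy A h 0 v)
                   + la_value S A H P r (stay_policy A) n (v (stay_policy A h 0 v))"
  have last_step: "h = H - 1 \<longleftrightarrow> n = 0" using Suc.prems by (auto simp: h_def)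
  have la: "la_value S A H P r (stay_policy A) (Suc n) 0 = (\<Sum>v\<in>?W. ?pr v * ?ret v)"
    by (simp add: h_def Let_def)
  show ?case
  proof (cases "n = 0")
    case True
    then show ?thesis
      using last_step by (simp add: la trap_reward_def sum_lookahead_outcomes_eq_one P_row_sum)
  next
    case False
    let ?q = "1 - (1 - p) ^ A"
    have ret: "?q ^ (n - 1) \<le> ?ret v" if "v \<in> ?G" for v
    proof -
      have "r h 0 (stay_policy A h 0 v) = 0"
        using False last_step by (simp add: trap_reward_def)
      moreover have "v (stay_policy A h 0 v) = 0"
        using that by (intro stay_policy_stays) auto
      ultimately show ?thesis
        using Suc.IH Suc.prems False by simp
    qed
    have "?q ^ (Suc n - 1) = (\<Sum>v\<in>?G. ?pr v * ?q ^ (n - 1))"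
      using False by (simp add: stay_probability power_eq_if flip: sum_distrib_right)
    also have "\<dots> \<le> (\<Sum>v\<in>?G. ?pr v * ?ret v)"
      by (intro sum_mono mult_left_mono ret prod_nonneg P_nonneg)
    also have "\<dots> \<le> (\<Sum>v\<in>?W. ?pr v * ?ret v)"
      by (intro sum_mono2 finite_PiE mult_nonneg_nonneg prod_nonneg P_nonneg add_nonneg_nonneg
          la_value_nonneg) (auto simp: trap_reward_def)
    finally show ?thesis by (simp only: la)
  qed
qed simp

lemma V0star_le:
  assumes "0 < A"
  shows "V0star S A H start_at_0 P r \<le> p ^ (H - 1)"
proof (rule V0star_leI[OF assms])
  fix pol assume "markov_policy A pol"
  then show "(\<Sum>s<S. start_at_0 s * nl_value S A H P r pol H s) \<le> p ^ (H - 1)"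
    using nl_value_le[of pol H 0] by (simp add: sum_start_at_0 split: if_splits)
qed

lemma VTstar_ge:
  assumes "0 < A" and "1 \<le> H"
  shows "(1 - (1 - p) ^ A) ^ (H - 1) \<le> VTstar S A H start_at_0 P r"
proof -
  have "(1 - (1 - p) ^ A) ^ (H - 1) \<le> (\<Sum>s<S. start_at_0 s * la_value S A H P r (stay_policy A) H s)"
    using la_value_stay_policy_ge[of H] assms(2) by (simp add: sum_start_at_0)
  also have "\<dots> \<le> VTstar S A H start_at_0 P r"
  proof (rule VTstar_geI[OF lookahead_policy_stay_policy[OF assms(1)]])
    fix pol
    have "la_value S A H P r pol H 0 \<le> real H"
      by (rule la_value_le_steps[OF P_nonneg P_row_sum]) (simp add: trap_reward_def)
    then show "(\<Sum>s<S. start_at_0 s * la_value S A H P r pol H s) \<le> real H"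
      by (simp only: sum_start_at_0)
  qed
  finally show ?thesis .
qed

end

lemma one_minus_inverse_pow_le: "0 < n \<Longrightarrow> (1 - 1 / real n) ^ n \<le> 1 / exp 1"
proof -
  assume n: "0 < n"
  have "(1 - 1 / real n) ^ n \<le> exp (- (1 / real n)) ^ n"
    using exp_ge_add_one_self[of "- (1 / real n)"] n by (intro power_mono) auto
  also have "\<dots> = 1 / exp 1"
    using n by (simp add: exp_minus inverse_eq_divide power_one_over flip: exp_of_nat_mult)
  finally show ?thesis .
qed

lemma half_le_one_minus_inverse_e: "1 / 2 \<le> 1 - 1 / exp (1::real)"
  using exp_ge_add_one_self[of 1] by (simp add: field_simps)

lemma minus_one_powr_le:
  fixes x c :: real
  assumes "1 / 2 \<le> c" "c \<le> 1" "1 < x"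
  shows "(x - 1) powr c \<le> c * x"
  using Youngs_inequality_0[of c "1 - c" "x - 1" 1] assms by (simp add: algebra_simps)

lemma lookahead_gap_le:
  fixes A H :: nat and q :: real
  defines "c \<equiv> 1 - 1 / exp 1"
  assumes A: "2 \<le> A" and H: "5 \<le> H" and q: "c \<le> q"
  shows "(1 / real A) ^ (H - 1) / q ^ (H - 1) \<le> 2 / (real A - 1) powr (c * real H - 3)"
proof -
  have c: "1 / 2 \<le> c" "c \<le> 1" using half_le_one_minus_inverse_e by (auto simp: c_def)
  have base: "0 < (real A - 1) powr c" using A by simp
  have "(real A - 1) powr (c * real H - 3) \<le> (real A - 1) powr (c * real (H - 1))"
    using A H c by (intro powr_mono) (auto simp: of_nat_diff algebra_simps)
  also have "\<dots> = ((real A - 1) powr c) ^ (H - 1)"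
    using base by (simp add: powr_powr powr_realpow flip: powr_powr)
  also have "\<dots> \<le> (real A * q) ^ (H - 1)"
  proof (rule power_mono)
    have "(real A - 1) powr c \<le> c * real A" using minus_one_powr_le[OF c] A by simp
    also have "\<dots> \<le> real A * q" using mult_right_mono[OF q, of "real A"] by (simp add: mult.commute)
    finally show "(real A - 1) powr c \<le> real A * q" .
  qed (use base in simp)
  finally have denominators: "(real A - 1) powr (c * real H - 3) \<le> (real A * q) ^ (H - 1)" .
  have "0 < real A * q" using A q c by (intro mult_pos_pos) auto
  have "(1 / real A) ^ (H - 1) / q ^ (H - 1) = 1 / (real A * q) ^ (H - 1)"
    by (simp add: power_one_over power_mult_distrib)
  also have "\<dots> \<le> 1 / (real A - 1) powr (c * real H - 3)"
    using denominators A \<open>0 < real A * q\<close> by (intro divide_left_mono mult_pos_pos) auto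
  also have "\<dots> \<le> 2 / (real A - 1) powr (c * real H - 3)"
    by (intro divide_right_mono) auto
  finally show ?thesis .
qed

theorem mainTheorem6:
  fixes S A H :: nat
  assumes "A \<ge> 2" and "H \<ge> 5"
    and "real S \<ge> real A powr ((1 - 1 / exp 1) * real H)"
  shows "\<exists>mu P r. is_mdp S A H mu P r \<and> (\<forall>h s a. r h s a \<in> {0, 1}) \<and>
           VTstar S A H mu P r > 0 \<and>
           V0star S A H mu P r / VTstar S A H mu P r
             \<le> 2 / (real A - 1) powr ((1 - 1 / exp 1) * real H - 3)"
proof -
  define p where "p = 1 / real A"
  define q where "q = 1 - (1 - p) ^ A"
  have "1 / 2 * 2 \<le> (1 - 1 / exp 1) * real H"
    using assms(2) half_le_one_minus_inverse_e by (intro mult_mono) auto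
  then have "real A powr 1 \<le> real A powr ((1 - 1 / exp 1) * real H)"
    using assms(1) by (intro powr_mono) auto
  then have "2 \<le> S" using assms by simp
  then interpret trap_mdp S A H p using assms(1) by unfold_locales (auto simp: p_def)
  have q: "1 - 1 / exp 1 \<le> q"
    using one_minus_inverse_pow_le[of A] assms(1) by (simp add: q_def p_def)
  have V0: "V0star S A H start_at_0 P r \<le> p ^ (H - 1)"
    and VT: "q ^ (H - 1) \<le> VTstar S A H start_at_0 P r"
    using V0star_le VTstar_ge assms(1,2) by (auto simp: q_def)
  have "0 < q" using q half_le_one_minus_inverse_e by linarith
  then have "0 < q ^ (H - 1)" by simp
  then have "V0star S A H start_at_0 P r / VTstar S A H start_at_0 P r \<le> p ^ (H - 1) / q ^ (H - 1)"
    using V0 VT by (intro frac_le) (auto simp: p_def)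
  also have "\<dots> \<le> 2 / (real A - 1) powr ((1 - 1 / exp 1) * real H - 3)"
    unfolding p_def using lookahead_gap_le[OF assms(1,2) q] .
  finally show ?thesis
    using is_mdp VT \<open>0 < q ^ (H - 1)\<close>
    by (intro exI[of _ start_at_0] exI[of _ P] exI[of _ r]) (auto simp: trap_reward_def)
qed

end
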